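(* Let $L\le\mathrm{Aff}(\mathbb{R}^n)$ be a subgroup whose centralizer in $\mathrm{Aff}(\mathbb{R}^n)$ acts transitively on an open subset $U\subseteq\mathbb{R}^n$. If $L$ preserves $U$, then the action of $L$ on $U$ is proper if and only if $L$ is a closed subgroup of $\mathrm{Aff}(\mathbb{R}^n)$.
   Context: $\mathrm{Aff}(\mathbb{R}^n)$ is the Lie group of affine transformations of $\mathbb{R}^n$. An action of a topological group $L$ on a locally compact Hausdorff space $X$ is proper if for every compact $K\subseteq X$ the set $\{\ell\in L\mid \ell K\cap K\neq\emptyset\}$ is compact. *)

theory Defs
  imports "HOL-Analysis.Analysis"
begin

text \<open>Aff(R^n) carries the subspace topology of the product
  real^'n^'n \<times> real^'n (the standard Lie group topology).\<close>

type_synonym 'n aff = "(real^'n^'n) \<times> (real^'n)"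

definition Aff :: "'n::finite aff set" where
  "Aff = {(A, b). invertible A}"

definition aff_app :: "'n::finite aff \<Rightarrow> real^'n \<Rightarrow> real^'n" where
  "aff_app g x = fst g *v x + snd g"

definition aff_mult :: "'n::finite aff \<Rightarrow> 'n aff \<Rightarrow> 'n aff" where
  "aff_mult g h = (fst g ** fst h, fst g *v snd h + snd g)"

definition aff_id :: "'n::finite aff" where
  "aff_id = (mat 1, 0)"

definition aff_inv :: "'n::finite aff \<Rightarrow> 'n aff" where
  "aff_inv g = (matrix_inv (fst g), - (matrix_inv (fst g) *v snd g))"

definition aff_subgroup :: "'n::finite aff set \<Rightarrow> bool" where
  "aff_subgroup L \<longleftrightarrow> L \<subseteq> Aff \<and> aff_id \<in> L \<and>
     (\<forall>g\<in>L. \<forall>h\<in>L. aff_mult g h \<in> L) \<and> (\<forall>g\<in>L. aff_inv g \<in> L)"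

definition aff_centralizer :: "'n::finite aff set \<Rightarrow> 'n aff set" where
  "aff_centralizer L = {g \<in> Aff. \<forall>l\<in>L. aff_mult g l = aff_mult l g}"

definition acts_transitively_on :: "'n::finite aff set \<Rightarrow> (real^'n) set \<Rightarrow> bool" where
  "acts_transitively_on G U \<longleftrightarrow> U \<noteq> {} \<and> (\<forall>g\<in>G. aff_app g ` U \<subseteq> U) \<and>
     (\<forall>x\<in>U. \<forall>y\<in>U. \<exists>g\<in>G. aff_app g x = y)"

text \<open>Proper action of L on U (compactness of a subset of L in the subspace topology of L
  coincides with compactness in the ambient space).\<close>
definition proper_action_on :: "'n::finite aff set \<Rightarrow> (real^'n) set \<Rightarrow> bool" where
  "proper_action_on L U \<longleftrightarrow>
     (\<forall>K. K \<subseteq> U \<and> compact K \<longrightarrow> compact {l \<in> L. aff_app l ` K \<inter> K \<noteq> {}})"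

end

theory Submission
  imports Defs
begin

text \<open>
  For \<open>l \<in> L\<close> the displacement \<open>x \<mapsto> l x - x\<close> intertwines each \<open>c\<close> in
  the centralizer \<open>C\<close> of \<open>L\<close> with its linear part: \<open>w (c x) = A_c (w x)\<close>.  Such
  intertwiners form a closed cone, and by transitivity of \<open>C\<close> on the open set \<open>U\<close> an
  intertwiner vanishing at one point of \<open>U\<close> vanishes on \<open>U\<close>, hence is zero.  A compactness
  argument then gives a coercivity bound \<open>m \<parallel>w\<parallel> \<le> \<parallel>w y\<parallel>\<close> for \<open>y\<close> in a compact \<open>K \<subseteq> U\<close>,
  so the return set \<open>{l \<in> L. l K \<inter> K \<noteq> {}}\<close> is bounded.  Being closed under inversion,
  it is then compact as soon as \<open>L\<close> is closed in \<open>Aff\<close>: this is "closed \<Longrightarrow> proper".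
  Conversely, if a sequence in \<open>L\<close> converges to \<open>g \<in> Aff\<close>, one finds \<open>z \<in> U\<close> with \<open>g z \<in> U\<close>;
  the orbit of \<open>z\<close> together with its limit is a compact subset of \<open>U\<close>, and properness
  forces \<open>g \<in> L\<close>: this is "proper \<Longrightarrow> closed".
\<close>

lemma aff_app_mult: "aff_app (aff_mult g h) x = aff_app g (aff_app h x)"
  by (simp add: aff_app_def aff_mult_def matrix_vector_mul_assoc matrix_vector_right_distrib)

lemma aff_app_scaleR: "aff_app (r *\<^sub>R w) x = r *\<^sub>R aff_app w x"
  by (simp add: aff_app_def scaleR_matrix_vector_assoc scaleR_right_distrib)

definition aff_displacement :: "'n::finite aff \<Rightarrow> 'n aff" where
  "aff_displacement l = (fst l - mat 1, snd l)"

lemma aff_app_displacement: "aff_app (aff_displacement l) x = aff_app l x - x"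
  by (simp add: aff_displacement_def aff_app_def matrix_vector_mult_diff_rdistrib)

lemma matrix_inv_both_sides:
  fixes A :: "real^'n^'n"
  assumes "invertible A"
  shows "A ** matrix_inv A = mat 1" "matrix_inv A ** A = mat 1"
  using someI_ex[OF assms[unfolded invertible_def]] by (simp_all add: matrix_inv_def)

lemma aff_app_inv:
  assumes "invertible (fst g)"
  shows "aff_app g (aff_app (aff_inv g) u) = u" "aff_app (aff_inv g) (aff_app g u) = u"
  using matrix_inv_both_sides[OF assms]
  by (auto simp: aff_app_def aff_inv_def matrix_vector_mul_assoc matrix_vector_right_distrib
      matrix_vector_mult_diff_distrib)

text \<open>An affine map vanishing on a nonempty open set is the zero pair: its zero set is an
  affine subspace containing the affine hull of the open set, which is everything.\<close>
lemma aff_app_zero_on_open: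
  fixes w :: "'n::finite aff"
  assumes "open U" "U \<noteq> {}" "\<And>x. x \<in> U \<Longrightarrow> aff_app w x = 0"
  shows "w = 0"
proof -
  have "affine {x. aff_app w x = 0}"
    unfolding affine_def
  proof (intro ballI allI impI)
    fix x y :: "real^'n" and u v :: real
    assume "x \<in> {x. aff_app w x = 0}" "y \<in> {x. aff_app w x = 0}" "u + v = 1"
    have "u *\<^sub>R aff_app w x + v *\<^sub>R aff_app w y
        = (u + v) *\<^sub>R snd w + fst w *v (u *\<^sub>R x + v *\<^sub>R y)"
      by (simp add: aff_app_def matrix_vector_right_distrib matrix_vector_mult_scaleR algebra_simps)
    then show "u *\<^sub>R x + v *\<^sub>R y \<in> {x. aff_app w x = 0}"
      using \<open>x \<in> _\<close> \<open>y \<in> _\<close> \<open>u + v = 1\<close> by (simp add: aff_app_def add.commute)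
  qed
  then have "affine hull U \<subseteq> {x. aff_app w x = 0}"
    using assms(3) by (intro hull_minimal) auto
  then have zero: "aff_app w x = 0" for x
    using affine_hull_open[OF assms(1,2)] by auto
  have "fst w *v x = 0" for x
    using zero[of x] zero[of 0] by (simp add: aff_app_def)
  then have "fst w = 0"
    by (simp add: matrix_eq)
  moreover have "snd w = 0"
    using zero[of 0] by (simp add: aff_app_def)
  ultimately show ?thesis
    by (simp add: prod_eq_iff)
qed

lemma tendsto_matrix_vector_mult:
  fixes f :: "'a \<Rightarrow> real^'n^'m" and g :: "'a \<Rightarrow> real^'n"
  assumes "(f \<longlongrightarrow> A) F" "(g \<longlongrightarrow> x) F"
  shows "((\<lambda>t. f t *v g t) \<longlongrightarrow> A *v x) F"
proof (rule vec_tendstoI)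
  fix i
  show "((\<lambda>t. (f t *v g t) $ i) \<longlongrightarrow> (A *v x) $ i) F"
    unfolding matrix_vector_mult_def using assms by (auto intro!: tendsto_intros)
qed

lemma continuous_on_matrix_vector_mult:
  fixes f :: "'a::topological_space \<Rightarrow> real^'n^'m" and g :: "'a \<Rightarrow> real^'n"
  assumes "continuous_on S f" "continuous_on S g"
  shows "continuous_on S (\<lambda>t. f t *v g t)"
  using assms unfolding continuous_on_def by (auto intro: tendsto_matrix_vector_mult)

lemma continuous_on_matrix_matrix_mult:
  fixes f :: "'a::topological_space \<Rightarrow> real^'n^'m" and g :: "'a \<Rightarrow> real^'k^'n"
  assumes "continuous_on S f" "continuous_on S g"
  shows "continuous_on S (\<lambda>t. f t ** g t)"
  unfolding matrix_matrix_mult_def using assms by (auto intro!: continuous_intros)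

lemma tendsto_aff_app:
  assumes "(f \<longlongrightarrow> g) F" "(x \<longlongrightarrow> y) F"
  shows "((\<lambda>t. aff_app (f t) (x t)) \<longlongrightarrow> aff_app g y) F"
  unfolding aff_app_def
  by (intro tendsto_add tendsto_matrix_vector_mult tendsto_fst tendsto_snd assms)

lemma continuous_on_aff_app:
  assumes "continuous_on S f" "continuous_on S x"
  shows "continuous_on S (\<lambda>t. aff_app (f t) (x t))"
  using assms unfolding continuous_on_def by (auto intro: tendsto_aff_app)

subsection \<open>Intertwiners of the centralizer\<close>

definition aff_intertwiners :: "'n::finite aff set \<Rightarrow> 'n aff set" where
  "aff_intertwiners C = {w. \<forall>c\<in>C. \<forall>x. aff_app w (aff_app c x) = fst c *v aff_app w x}"

lemma displacement_intertwines_centralizer: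
  assumes "l \<in> L"
  shows "aff_displacement l \<in> aff_intertwiners (aff_centralizer L)"
  unfolding aff_intertwiners_def
proof (intro CollectI ballI allI)
  fix c x assume "c \<in> aff_centralizer L"
  then have "aff_mult c l = aff_mult l c"
    using assms by (auto simp: aff_centralizer_def)
  then have commute: "aff_app c (aff_app l x) = aff_app l (aff_app c x)"
    by (metis aff_app_mult)
  show "aff_app (aff_displacement l) (aff_app c x) = fst c *v aff_app (aff_displacement l) x"
    unfolding aff_app_displacement commute[symmetric]
    by (simp add: aff_app_def matrix_vector_mult_diff_distrib)
qed

lemma aff_intertwiners_scaleR: "w \<in> aff_intertwiners C \<Longrightarrow> r *\<^sub>R w \<in> aff_intertwiners C"
  by (simp add: aff_intertwiners_def aff_app_scaleR matrix_vector_mult_scaleR)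

lemma closed_aff_intertwiners: "closed (aff_intertwiners C)"
proof -
  have eq: "aff_intertwiners C =
      (\<Inter>c\<in>C. \<Inter>x. {w. aff_app w (aff_app c x) - fst c *v aff_app w x = 0})"
    unfolding aff_intertwiners_def by auto
  have "closed {w. aff_app w (aff_app c x) - fst c *v aff_app w x = 0}" for c x
    by (intro closed_Collect_eq continuous_on_matrix_vector_mult continuous_on_aff_app
        continuous_intros)
  then show ?thesis
    unfolding eq by (intro closed_INT ballI)
qed

text \<open>Transitivity of \<open>C\<close> spreads a zero of an intertwiner over all of \<open>U\<close>.\<close>
lemma aff_intertwiner_zero:
  assumes tr: "acts_transitively_on C U" and "open U"
    and w: "w \<in> aff_intertwiners C" and "y \<in> U" "aff_app w y = 0"
  shows "w = 0"
proof (rule aff_app_zero_on_open[OF \<open>open U\<close>])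
  show "U \<noteq> {}" using \<open>y \<in> U\<close> by blast
  fix z assume "z \<in> U"
  then obtain c where "c \<in> C" "aff_app c y = z"
    using tr \<open>y \<in> U\<close> unfolding acts_transitively_on_def by blast
  then show "aff_app w z = 0"
    using w \<open>aff_app w y = 0\<close> unfolding aff_intertwiners_def by auto
qed

subsection \<open>Coercivity\<close>

lemma aff_coercive:
  fixes W :: "'n::finite aff set"
  assumes "closed W" and cone: "\<And>w r. w \<in> W \<Longrightarrow> r *\<^sub>R w \<in> W" and "compact K"
    and no_zero: "\<And>w y. w \<in> W \<Longrightarrow> y \<in> K \<Longrightarrow> aff_app w y = 0 \<Longrightarrow> w = 0"
  shows "\<exists>m>0. \<forall>w\<in>W. \<forall>y\<in>K. m * norm w \<le> norm (aff_app w y)"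
proof -
  define P where "P = (W \<inter> sphere 0 1) \<times> K"
  have normalize: "(1 / norm w) *\<^sub>R w \<in> W \<inter> sphere 0 1" if "w \<in> W" "w \<noteq> 0" for w
    using cone[OF that(1)] that(2) by auto
  show ?thesis
  proof (cases "P = {}")
    case True
    have "1 * norm w \<le> norm (aff_app w y)" if "w \<in> W" "y \<in> K" for w y
    proof -
      have "w = 0"
        using normalize[OF that(1)] that(2) True unfolding P_def by blast
      then show ?thesis
        by simp
    qed
    then show ?thesis
      using zero_less_one by blast
  next
    case False
    have "compact P"
      unfolding P_def using assms(1,3) by (intro compact_Times closed_Int_compact) auto
    moreover have "continuous_on P (\<lambda>p. norm (aff_app (fst p) (snd p)))"
      by (intro continuous_intros continuous_on_aff_app)
    ultimately obtain p0 where p0: "p0 \<in> P"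
      "\<And>p. p \<in> P \<Longrightarrow> norm (aff_app (fst p0) (snd p0)) \<le> norm (aff_app (fst p) (snd p))"
      using continuous_attains_inf[OF _ False] by blast
    define m where "m = norm (aff_app (fst p0) (snd p0))"
    have "m > 0"
      using p0(1) no_zero[of "fst p0" "snd p0"] unfolding m_def P_def by (auto simp: mem_Times_iff)
    moreover have "m * norm w \<le> norm (aff_app w y)" if "w \<in> W" "y \<in> K" for w y
    proof (cases "w = 0")
      case False
      have "m \<le> norm (aff_app ((1 / norm w) *\<^sub>R w) y)"
        using p0(2)[of "((1 / norm w) *\<^sub>R w, y)"] normalize[OF that(1) False] that(2)
        unfolding m_def P_def by auto
      also have "\<dots> = norm (aff_app w y) / norm w"
        by (simp add: aff_app_scaleR)
      finally show ?thesis
        using False by (simp add: field_simps)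
    qed simp
    ultimately show ?thesis
      by blast
  qed
qed

subsection \<open>Return sets\<close>

definition return_set :: "'n::finite aff set \<Rightarrow> (real^'n) set \<Rightarrow> 'n aff set" where
  "return_set L K = {l \<in> L. aff_app l ` K \<inter> K \<noteq> {}}"

lemma proper_action_on_return_set:
  "proper_action_on L U \<longleftrightarrow> (\<forall>K. K \<subseteq> U \<and> compact K \<longrightarrow> compact (return_set L K))"
  by (simp add: proper_action_on_def return_set_def)

text \<open>Coercivity on the intertwiners bounds the return sets of compact subsets of \<open>U\<close>.\<close>
lemma bounded_return_set:
  fixes L :: "'n::finite aff set"
  assumes "open U" and tr: "acts_transitively_on (aff_centralizer L) U"
    and "K \<subseteq> U" "compact K"
  shows "bounded (return_set L K)"
proof -
  define W where "W = aff_intertwiners (aff_centralizer L)"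
  have "\<exists>m>0. \<forall>w\<in>W. \<forall>y\<in>K. m * norm w \<le> norm (aff_app w y)"
    unfolding W_def
  proof (rule aff_coercive[OF closed_aff_intertwiners aff_intertwiners_scaleR \<open>compact K\<close>])
    show "w = 0" if "w \<in> aff_intertwiners (aff_centralizer L)" "y \<in> K" "aff_app w y = 0" for w y
      using aff_intertwiner_zero[OF tr \<open>open U\<close>] that \<open>K \<subseteq> U\<close> by blast
  qed
  then obtain m where m: "m > 0" "\<And>w y. w \<in> W \<Longrightarrow> y \<in> K \<Longrightarrow> m * norm w \<le> norm (aff_app w y)"
    by blast
  obtain B where B: "\<And>x. x \<in> K \<Longrightarrow> norm x \<le> B"
    using \<open>compact K\<close> compact_imp_bounded bounded_iff by metis
  have "norm l \<le> 2 * B / m + norm (aff_id :: 'n aff)" if l: "l \<in> return_set L K" for l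
  proof -
    obtain k where k: "k \<in> K" "aff_app l k \<in> K"
      using l unfolding return_set_def by auto
    have "aff_displacement l \<in> W"
      using displacement_intertwines_centralizer l unfolding W_def return_set_def by blast
    from m(2)[OF this k(1)]
    have "m * norm (aff_displacement l) \<le> norm (aff_app l k - k)"
      unfolding aff_app_displacement .
    also have "\<dots> \<le> 2 * B"
      using B[OF k(1)] B[OF k(2)] norm_triangle_ineq4[of "aff_app l k" k] by linarith
    finally have "norm (aff_displacement l) \<le> 2 * B / m"
      using m(1) by (simp add: field_simps)
    moreover have "l = aff_displacement l + aff_id"
      by (simp add: aff_displacement_def aff_id_def)
    then have "norm l \<le> norm (aff_displacement l) + norm (aff_id :: 'n aff)"
      by (metis norm_triangle_ineq)
    ultimately show ?thesis
      by linarith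
  qed
  then show ?thesis
    unfolding bounded_iff by blast
qed

lemma return_set_aff_inv:
  assumes "L \<subseteq> Aff" "\<forall>l\<in>L. aff_inv l \<in> L" "l \<in> return_set L K"
  shows "aff_inv l \<in> return_set L K"
proof -
  obtain k where k: "k \<in> K" "aff_app l k \<in> K"
    using assms(3) unfolding return_set_def by blast
  have "invertible (fst l)"
    using assms(1,3) by (auto simp: return_set_def Aff_def)
  then have "aff_app (aff_inv l) (aff_app l k) = k"
    by (rule aff_app_inv(2))
  then show ?thesis
    using assms(2,3) k unfolding return_set_def by force
qed

text \<open>A bounded return set of a relatively closed, inversion-closed \<open>L\<close> is compact: it is
  the projection of a compact set of triples \<open>(g, h, a)\<close> with \<open>h\<close> a bounded inverse of \<open>g\<close>,
  which keeps limits inside \<open>Aff\<close>.\<close>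
lemma compact_return_set:
  fixes L :: "'n::finite aff set"
  assumes LA: "L \<subseteq> Aff" and cl: "closedin (top_of_set Aff) L"
    and Linv: "\<forall>l\<in>L. aff_inv l \<in> L" and "compact K" and "bounded (return_set L K)"
  shows "compact (return_set L K)"
proof -
  obtain R where R: "\<And>l. l \<in> return_set L K \<Longrightarrow> norm l \<le> R"
    using assms(5) bounded_iff by metis
  obtain T where T: "closed T" "L = Aff \<inter> T"
    using cl unfolding closedin_closed by blast
  define Q where "Q = {(g, h, a). g \<in> T \<and> h \<in> T \<and> a \<in> K \<and> fst g ** fst h = mat 1 \<and>
      aff_app g a \<in> K \<and> g \<in> cball 0 R \<and> h \<in> cball 0 R}"
  have "Q = (T \<times> T \<times> K) \<inter> (cball 0 R \<times> cball 0 R \<times> UNIV)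
      \<inter> {p. fst (fst p) ** fst (fst (snd p)) = mat 1} \<inter> {p. aff_app (fst p) (snd (snd p)) \<in> K}"
    unfolding Q_def by auto
  moreover have "closed {p :: 'n aff \<times> 'n aff \<times> (real^'n). fst (fst p) ** fst (fst (snd p)) = mat 1}"
    by (intro closed_Collect_eq continuous_on_matrix_matrix_mult continuous_intros)
  moreover have "closed {p :: 'n aff \<times> 'n aff \<times> (real^'n). aff_app (fst p) (snd (snd p)) \<in> K}"
    using compact_imp_closed[OF \<open>compact K\<close>]
    by (intro closed_vimage[unfolded vimage_def] continuous_on_aff_app continuous_intros)
  ultimately have "closed Q"
    using T(1) compact_imp_closed[OF \<open>compact K\<close>] by (simp add: closed_Int closed_Times)
  moreover have "bounded Q"
    by (rule bounded_subset[of "cball 0 R \<times> cball 0 R \<times> K"])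
      (use \<open>compact K\<close> compact_imp_bounded in \<open>auto intro!: bounded_Times simp: Q_def\<close>)
  ultimately have "compact Q"
    by (simp add: compact_eq_bounded_closed)
  have "return_set L K = fst ` Q"
  proof
    show "return_set L K \<subseteq> fst ` Q"
    proof
      fix l assume l: "l \<in> return_set L K"
      then obtain k where k: "k \<in> K" "aff_app l k \<in> K"
        unfolding return_set_def by auto
      have il: "aff_inv l \<in> return_set L K"
        using return_set_aff_inv[OF LA Linv l] .
      have "invertible (fst l)"
        using l LA by (auto simp: return_set_def Aff_def)
      then have "fst l ** fst (aff_inv l) = mat 1"
        by (simp add: aff_inv_def matrix_inv_both_sides)
      then have "(l, aff_inv l, k) \<in> Q"
        using k l il R[OF l] R[OF il] T(2) unfolding Q_def return_set_def by auto
      then show "l \<in> fst ` Q"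
        by force
    qed
    show "fst ` Q \<subseteq> return_set L K"
    proof
      fix g assume "g \<in> fst ` Q"
      then obtain h a where p: "(g, h, a) \<in> Q"
        by force
      then have "invertible (fst g)"
        unfolding invertible_right_inverse Q_def by blast
      then have "g \<in> L"
        using p T(2) unfolding Q_def Aff_def by (cases g) auto
      then show "g \<in> return_set L K"
        using p unfolding Q_def return_set_def by blast
    qed
  qed
  then show ?thesis
    using compact_continuous_image[OF continuous_on_fst[OF continuous_on_id] \<open>compact Q\<close>]
    by simp
qed

lemma proper_if_closed:
  assumes "aff_subgroup L" "open U" "acts_transitively_on (aff_centralizer L) U"
    and "closedin (top_of_set Aff) L"
  shows "proper_action_on L U"
  unfolding proper_action_on_return_set
  using assms bounded_return_set compact_return_set unfolding aff_subgroup_def by blast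

text \<open>A limit \<open>g \<in> Aff\<close> of maps preserving the open set \<open>U\<close> still moves some point of \<open>U\<close>
  into \<open>U\<close>: \<open>g y \<in> closure U\<close> for \<open>y \<in> U\<close>, and the open set \<open>g U\<close> meets \<open>closure U\<close>,
  hence meets \<open>U\<close>.\<close>
lemma limit_moves_point_into:
  assumes "open U" "U \<noteq> {}" "g \<in> Aff" "l \<longlonglongrightarrow> g" "\<And>n. aff_app (l n) ` U \<subseteq> U"
  shows "\<exists>z\<in>U. aff_app g z \<in> U"
proof -
  obtain y where y: "y \<in> U" using assms(2) by blast
  have "aff_app g y \<in> closure U"
    unfolding closure_sequential using y assms(5)
    by (intro exI[of _ "\<lambda>n. aff_app (l n) y"]) (auto intro: tendsto_aff_app assms(4))
  have invg: "invertible (fst g)" using assms(3) by (auto simp: Aff_def)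
  define V where "V = aff_app (aff_inv g) -` U"
  have "open V" unfolding V_def
    by (intro open_vimage[OF assms(1)] continuous_on_aff_app continuous_intros)
  moreover have "aff_app g y \<in> V"
    unfolding V_def using aff_app_inv(2)[OF invg] y by simp
  ultimately obtain u where u: "u \<in> V" "u \<in> U"
    using \<open>aff_app g y \<in> closure U\<close> open_Int_closure_eq_empty[of V U] by blast
  show ?thesis
    using u aff_app_inv(1)[OF invg] unfolding V_def by (intro bexI[of _ "aff_app (aff_inv g) u"]) auto
qed

lemma closed_if_proper:
  assumes LA: "L \<subseteq> Aff" and "open U" "U \<noteq> {}" and pres: "\<forall>l\<in>L. aff_app l ` U \<subseteq> U"
    and pr: "proper_action_on L U"
  shows "closedin (top_of_set Aff) L"
proof -
  have "Aff \<inter> closure L \<subseteq> L"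
  proof
    fix g assume g: "g \<in> Aff \<inter> closure L"
    then obtain l where l: "\<And>n. l n \<in> L" "l \<longlonglongrightarrow> g"
      using closure_sequential by blast
    obtain z where z: "z \<in> U" "aff_app g z \<in> U"
      using limit_moves_point_into[OF assms(2,3) _ l(2)] g l(1) pres by blast
    define K where "K = insert z (insert (aff_app g z) (range (\<lambda>n. aff_app (l n) z)))"
    have "compact K"
      unfolding K_def by (intro compact_insert compact_sequence_with_limit tendsto_aff_app l(2)) simp
    moreover have "K \<subseteq> U"
      unfolding K_def using z pres l(1) by blast
    ultimately have "closed (return_set L K)"
      using pr compact_imp_closed unfolding proper_action_on_return_set by blast
    moreover have "l n \<in> return_set L K" for n
      using l(1) unfolding K_def return_set_def by blast
    ultimately have "g \<in> return_set L K"
      using closed_sequentially l(2) by blast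
    then show "g \<in> L"
      by (simp add: return_set_def)
  qed
  then have "L = Aff \<inter> closure L"
    using LA closure_subset by blast
  then show ?thesis
    unfolding closedin_closed by blast
qed

theorem proposition7p3:
  fixes L :: "'n::finite aff set" and U :: "(real^'n) set"
  assumes "aff_subgroup L"
    and "open U"
    and "acts_transitively_on (aff_centralizer L) U"
    and "\<forall>l\<in>L. aff_app l ` U \<subseteq> U"
  shows "proper_action_on L U \<longleftrightarrow> closedin (top_of_set Aff) L"
proof
  assume "proper_action_on L U"
  moreover have "L \<subseteq> Aff" "U \<noteq> {}"
    using assms(1,3) by (simp_all add: aff_subgroup_def acts_transitively_on_def)
  ultimately show "closedin (top_of_set Aff) L"
    using closed_if_proper assms(2,4) by blast
next
  assume "closedin (top_of_set Aff) L"
  then show "proper_action_on L U"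
    using proper_if_closed assms(1-3) by blast
qed

end
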